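(* Let $\gamma_k>0$, $k\in\mathcal{N}$, let $y(t)$ solve $\dot y_k=\gamma_kv_k(Q(y))$, and let $x(t)=Q(y(t))$. Assume each player's penalty function is decomposable, $h_k(x_k)=\sum_{\beta\in\mathcal{A}_k}\theta_k(x_{k\beta})$. If $\alpha,\beta\in\mathcal{A}_k$ with $\alpha\prec\beta$ (i.e. $v_{k\alpha}(x)<v_{k\beta}(x)$ for all $x\in\mathcal{X}$), then for all $t\ge0$ $$x_{k\alpha}(t)\le\phi_k(c_k-\gamma_k\delta_kt),$$ where $c_k$ is a constant depending only on the initial conditions, $\delta_k=\min\{v_{k\beta}(x)-v_{k\alpha}(x):x\in\mathcal{X}\}$, and $\phi_k(z)=0$ if $z\le\theta_k'(0^+)$, $\phi_k(z)=1$ if $z\ge\theta_k'(1^-)$, and $\phi_k(z)=(\theta_k')^{-1}(z)$ otherwise. In particular, if $\theta_k'(0)$ is finite, dominated strategies become extinct in finite time.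
   Context: Setting: finite game with players $\mathcal{N}$, action sets $\mathcal{A}_k$, mixed strategies $\mathcal{X}_k=\Delta(\mathcal{A}_k)$, $\mathcal{X}=\prod_k\mathcal{X}_k$, payoff vectors $v_k(x)=(u_k(\alpha;x_{-k}))_{\alpha\in\mathcal{A}_k}$ with $u_k$ multilinear expected payoffs. The kernel $\theta_k:[0,1]\to\mathbb{R}$ is continuous, strongly convex and smooth on $(0,1]$; then $h_k$ is a penalty function (continuous, smooth on relative interiors of faces, strongly convex) on $\mathcal{X}_k$ with choice map $Q_k(y_k)=\arg\max_{x_k\in\mathcal{X}_k}\{\langle y_k,x_k\rangle-h_k(x_k)\}$; $Q=(Q_k)_k$. $\theta_k'(0^+)$ and $\theta_k'(1^-)$ denote one-sided limits of $\theta_k'$ (possibly $-\infty$ at $0$). *)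

theory Defs
  imports "HOL-Analysis.Analysis"
begin

definition strongly_convex_on :: "real set \<Rightarrow> (real \<Rightarrow> real) \<Rightarrow> bool" where
  "strongly_convex_on S f \<longleftrightarrow> (\<exists>m>0. \<forall>a\<in>S. \<forall>b\<in>S. \<forall>l\<in>{0..1}.
      f (l * a + (1 - l) * b) \<le> l * f a + (1 - l) * f b - m / 2 * l * (1 - l) * (a - b)^2)"

definition mixed_strats :: "'a set \<Rightarrow> ('a \<Rightarrow> real) set" where
  "mixed_strats A = {p. (\<forall>a\<in>A. 0 \<le> p a) \<and> sum p A = 1 \<and> (\<forall>a. a \<notin> A \<longrightarrow> p a = 0)}"

definition strategy_space :: "'n set \<Rightarrow> ('n \<Rightarrow> 'a set) \<Rightarrow> ('n \<Rightarrow> 'a \<Rightarrow> real) set" where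
  "strategy_space N A = {x. (\<forall>k\<in>N. x k \<in> mixed_strats (A k)) \<and> (\<forall>k. k \<notin> N \<longrightarrow> x k = (\<lambda>_. 0))}"

definition exp_payoff :: "'n set \<Rightarrow> ('n \<Rightarrow> 'a set) \<Rightarrow> ('n \<Rightarrow> ('n \<Rightarrow> 'a) \<Rightarrow> real)
    \<Rightarrow> 'n \<Rightarrow> ('n \<Rightarrow> 'a \<Rightarrow> real) \<Rightarrow> real" where
  "exp_payoff N A u k x = (\<Sum>p\<in>PiE N A. (\<Prod>j\<in>N. x j (p j)) * u k p)"

definition payoff_vec :: "'n set \<Rightarrow> ('n \<Rightarrow> 'a set) \<Rightarrow> ('n \<Rightarrow> ('n \<Rightarrow> 'a) \<Rightarrow> real)
    \<Rightarrow> 'n \<Rightarrow> 'a \<Rightarrow> ('n \<Rightarrow> 'a \<Rightarrow> real) \<Rightarrow> real" where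
  "payoff_vec N A u k \<alpha> x = exp_payoff N A u k (x(k := (\<lambda>b. if b = \<alpha> then 1 else 0)))"

definition decomp_penalty :: "(real \<Rightarrow> real) \<Rightarrow> 'a set \<Rightarrow> ('a \<Rightarrow> real) \<Rightarrow> real" where
  "decomp_penalty \<theta> A p = (\<Sum>b\<in>A. \<theta> (p b))"

definition choice_k :: "(('a \<Rightarrow> real) \<Rightarrow> real) \<Rightarrow> 'a set \<Rightarrow> ('a \<Rightarrow> real) \<Rightarrow> ('a \<Rightarrow> real)" where
  "choice_k h A y = (THE p. p \<in> mixed_strats A \<and>
      (\<forall>q\<in>mixed_strats A. (\<Sum>a\<in>A. y a * q a) - h q \<le> (\<Sum>a\<in>A. y a * p a) - h p))"

definition choice_map :: "'n set \<Rightarrow> ('n \<Rightarrow> 'a set) \<Rightarrow> ('n \<Rightarrow> ('a \<Rightarrow> real) \<Rightarrow> real)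
    \<Rightarrow> ('n \<Rightarrow> 'a \<Rightarrow> real) \<Rightarrow> ('n \<Rightarrow> 'a \<Rightarrow> real)" where
  "choice_map N A h y = (\<lambda>k. if k \<in> N then choice_k (h k) (A k) (y k) else (\<lambda>_. 0))"

definition deriv0 :: "(real \<Rightarrow> real) \<Rightarrow> ereal" where
  "deriv0 d = Lim (at_right 0) (\<lambda>s. ereal (d s))"

definition deriv1 :: "(real \<Rightarrow> real) \<Rightarrow> ereal" where
  "deriv1 d = Lim (at_left 1) (\<lambda>s. ereal (d s))"

definition phi :: "(real \<Rightarrow> real) \<Rightarrow> real \<Rightarrow> real" where
  "phi d z = (if ereal z \<le> deriv0 d then 0
              else if ereal z \<ge> deriv1 d then 1
              else (THE s. s \<in> {0<..<1} \<and> d s = z))"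

end

theory Submission
  imports Defs
begin

text \<open>The difference of scores \<open>y\<^sub>k\<^sub>\<alpha> - y\<^sub>k\<^sub>\<beta>\<close> has derivative
  \<open>\<gamma>\<^sub>k (v\<^sub>k\<^sub>\<alpha> - v\<^sub>k\<^sub>\<beta>) \<le> -\<gamma>\<^sub>k \<delta>\<^sub>k\<close>, so it decreases at least linearly;
  \<open>\<delta>\<^sub>k > 0\<close> because a continuous positive gap attains its minimum on the compact strategy space.
  On the other hand, moving mass \<open>e\<close> from \<open>\<alpha>\<close> to \<open>\<beta>\<close> cannot improve the value of the
  choice problem, which by convexity of \<open>\<theta>\<^sub>k\<close> yields the first-order inequality
  \<open>\<theta>\<^sub>k'(x\<^sub>k\<^sub>\<alpha>) \<le> y\<^sub>k\<^sub>\<alpha> - y\<^sub>k\<^sub>\<beta> + \<theta>\<^sub>k'(1)\<close>. Inverting the strictly increasing \<open>\<theta>\<^sub>k'\<close> gives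
  the bound through \<open>\<phi>\<^sub>k\<close>, and once the argument drops below a finite \<open>\<theta>\<^sub>k'(0\<^sup>+)\<close>,
  \<open>\<phi>\<^sub>k\<close> vanishes.\<close>

section \<open>Compactness of the strategy space and the payoff gap\<close>

lemma compact_PiE_UNIV:
  fixes S :: "'b::topological_space set"
  assumes "compact S"
  shows "compact (PiE (UNIV::'i set) (\<lambda>_. S))"
proof -
  have "compactin (product_topology (\<lambda>i. euclidean) (UNIV::'i set)) (PiE UNIV (\<lambda>_. S))"
    using assms by (simp add: compactin_PiE compactin_euclidean_iff)
  then show ?thesis by (simp add: euclidean_product_topology compactin_euclidean_iff)
qed

lemma continuous_on_eval2: "continuous_on UNIV (\<lambda>z::'n \<Rightarrow> 'a \<Rightarrow> real. z j b)"
proof -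
  have "continuous_on UNIV ((\<lambda>f::'a \<Rightarrow> real. f b) \<circ> (\<lambda>z::'n \<Rightarrow> 'a \<Rightarrow> real. z j))"
    by (rule continuous_on_compose)
      (auto intro: continuous_on_subset[OF continuous_on_product_coordinates])
  then show ?thesis by (simp add: o_def)
qed

lemma mixed_strats_range:
  assumes "q \<in> mixed_strats A" "finite A"
  shows "q b \<in> {0..1}"
proof (cases "b \<in> A")
  case True
  then have "q b \<le> sum q A" using assms by (intro member_le_sum) (auto simp: mixed_strats_def)
  then show ?thesis using True assms by (auto simp: mixed_strats_def)
qed (use assms in \<open>auto simp: mixed_strats_def\<close>)

lemma closed_mixed_strats: "closed (mixed_strats A)"
proof -
  have eq: "mixed_strats A =
      (\<Inter>a\<in>A. {p. 0 \<le> p a}) \<inter> {p. sum p A = 1} \<inter> (\<Inter>a\<in>-A. {p. p a = 0})"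
    by (auto simp: mixed_strats_def)
  show ?thesis
    unfolding eq by (intro closed_Int closed_INT ballI closed_Collect_le closed_Collect_eq continuous_on_sum
        continuous_on_const) auto
qed

lemma compact_mixed_strats:
  assumes "finite A"
  shows "compact (mixed_strats A)"
proof -
  have "mixed_strats A \<subseteq> PiE UNIV (\<lambda>_. {0..1::real})"
    using mixed_strats_range[OF _ assms] by auto
  then show ?thesis
    using compact_Int_closed[OF compact_PiE_UNIV[OF compact_Icc[of "0::real" 1]] closed_mixed_strats[of A]]
    by (metis Int_absorb1)
qed

lemma compact_strategy_space:
  fixes N :: "'n set" and A :: "'n \<Rightarrow> 'a set"
  assumes "\<And>j. j \<in> N \<Longrightarrow> finite (A j)"
  shows "compact (strategy_space N A)"
proof -
  have "x j b \<in> {0..1}" if "x \<in> strategy_space N A" for x j b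
    using that mixed_strats_range[of "x j" "A j" b] assms
    by (cases "j \<in> N") (auto simp: strategy_space_def)
  then have sub: "strategy_space N A \<subseteq> PiE UNIV (\<lambda>_. PiE UNIV (\<lambda>_. {0..1::real}))"
    by auto
  have eq: "strategy_space N A =
      (\<Inter>j\<in>N. (\<lambda>x. x j) -` mixed_strats (A j)) \<inter> (\<Inter>j\<in>-N. \<Inter>b. {x. x j b = 0})"
    by (auto simp: strategy_space_def)
  have "closed ((\<lambda>x. x j) -` mixed_strats (A j))" for j :: 'n
    using continuous_on_closed_vimage[of UNIV "\<lambda>x::'n \<Rightarrow> 'a \<Rightarrow> real. x j"]
      continuous_on_product_coordinates closed_mixed_strats by fastforce
  then have "closed (strategy_space N A)" unfolding eq
    by (intro closed_Int closed_INT ballI closed_Collect_eq continuous_on_eval2 continuous_on_const)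
  then show ?thesis
    using compact_Int_closed[OF compact_PiE_UNIV[OF compact_PiE_UNIV[OF compact_Icc[of "0::real" 1]]]] sub
    by (metis Int_absorb1)
qed

lemma strategy_space_nonempty:
  assumes "\<And>j. j \<in> N \<Longrightarrow> finite (A j) \<and> A j \<noteq> {}"
  shows "strategy_space N A \<noteq> {}"
proof -
  define z where "z = (\<lambda>j. if j \<in> N then (\<lambda>b. if b = (SOME a. a \<in> A j) then 1 else 0)
    else (\<lambda>_. 0::real))"
  have "z j \<in> mixed_strats (A j)" if "j \<in> N" for j
    using that assms[OF that] some_in_eq[of "A j"] by (auto simp: z_def mixed_strats_def)
  then have "z \<in> strategy_space N A" by (auto simp: strategy_space_def z_def)
  then show ?thesis by blast
qed

lemma continuous_on_payoff_vec:
  fixes N :: "'n set" and A :: "'n \<Rightarrow> 'a set"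
  shows "continuous_on UNIV (payoff_vec N A u k a)"
proof -
  have "continuous_on UNIV (\<lambda>z::'n \<Rightarrow> 'a \<Rightarrow> real. (z(k := e)) j b)" for e j b
    by (cases "j = k") (simp_all add: continuous_on_eval2)
  then show ?thesis
    unfolding payoff_vec_def exp_payoff_def
    by (intro continuous_on_sum continuous_on_mult continuous_on_prod continuous_on_const)
qed

lemma payoff_gap_Inf_pos:
  assumes "\<And>j. j \<in> N \<Longrightarrow> finite (A j) \<and> A j \<noteq> {}"
    and "\<forall>z \<in> strategy_space N A. payoff_vec N A u k \<alpha> z < payoff_vec N A u k \<beta> z"
  defines "\<delta> \<equiv> INF z\<in>strategy_space N A. payoff_vec N A u k \<beta> z - payoff_vec N A u k \<alpha> z"
  shows "\<delta> > 0"
    and "\<And>z. z \<in> strategy_space N A \<Longrightarrow> \<delta> \<le> payoff_vec N A u k \<beta> z - payoff_vec N A u k \<alpha> z"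
proof -
  let ?S = "strategy_space N A" and ?f = "\<lambda>z. payoff_vec N A u k \<beta> z - payoff_vec N A u k \<alpha> z"
  have "continuous_on ?S ?f"
    by (intro continuous_on_diff continuous_on_subset[OF continuous_on_payoff_vec]) auto
  moreover have "compact ?S" "?S \<noteq> {}"
    using compact_strategy_space[of N A] strategy_space_nonempty[of N A, OF assms(1)] assms(1)
    by auto
  ultimately obtain zm where zm: "zm \<in> ?S" "\<forall>z\<in>?S. ?f zm \<le> ?f z"
    using continuous_attains_inf by blast
  then have "\<delta> = ?f zm" unfolding \<delta>_def by (intro cInf_eq_minimum) auto
  then show "\<delta> > 0" "\<And>z. z \<in> ?S \<Longrightarrow> \<delta> \<le> ?f z" using zm assms(2) by auto
qed

section \<open>Penalty kernels\<close>

lemma strongly_convex_tangent: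
  fixes \<theta> \<theta>' :: "real \<Rightarrow> real"
  assumes sc: "\<forall>a\<in>{0..1}. \<forall>b\<in>{0..1}. \<forall>l\<in>{0..1}.
      \<theta> (l * a + (1 - l) * b) \<le> l * \<theta> a + (1 - l) * \<theta> b - m / 2 * l * (1 - l) * (a - b)^2"
    and der: "(\<theta> has_real_derivative \<theta>' a) (at a within {0..1})"
    and a: "a \<in> {0..1}" and b: "b \<in> {0..1}"
  shows "\<theta> a + \<theta>' a * (b - a) + m / 2 * (b - a)^2 \<le> \<theta> b"
proof -
  define g where "g = (\<lambda>l. a + l * (b - a))"
  have "g l \<in> {0..1}" if "l \<in> {0..1}" for l
  proof -
    have "g l = l * b + (1 - l) * a" by (simp add: g_def algebra_simps)
    moreover have "l * b + (1 - l) * a \<le> l * 1 + (1 - l) * 1"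
      using that a b by (intro add_mono mult_left_mono) auto
    ultimately show ?thesis using that a b by auto
  qed
  then have "g ` {0..1} \<subseteq> {0..1}" by auto
  then have "(\<theta> has_real_derivative \<theta>' a) (at (g 0) within (g ` {0..1}))"
    using has_field_derivative_subset[OF der] by (simp add: g_def)
  moreover have "(g has_real_derivative (b - a)) (at 0 within {0..1})"
    unfolding g_def by (auto intro!: derivative_eq_intros)
  ultimately have "(\<theta> \<circ> g has_real_derivative \<theta>' a * (b - a)) (at 0 within {0..1})"
    by (rule DERIV_image_chain)
  then have lim: "((\<lambda>l. (\<theta> (g l) - \<theta> (g 0)) / (l - 0)) \<longlongrightarrow> \<theta>' a * (b - a)) (at_right 0)"
    unfolding has_field_derivative_iff by (simp add: at_within_Icc_at_right o_def)
  have "(\<theta> (g l) - \<theta> (g 0)) / (l - 0) \<le> \<theta> b - \<theta> a - m / 2 * (1 - l) * (b - a)^2"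
    if "0 < l" "l < 1" for l
  proof -
    have "\<theta> (l * b + (1 - l) * a) \<le> l * \<theta> b + (1 - l) * \<theta> a - m / 2 * l * (1 - l) * (b - a)^2"
      using sc that a b by auto
    moreover have "g l = l * b + (1 - l) * a" "g 0 = a" by (simp_all add: g_def algebra_simps)
    ultimately have "\<theta> (g l) - \<theta> (g 0) \<le> l * (\<theta> b - \<theta> a - m / 2 * (1 - l) * (b - a)^2)"
      by (simp only:) (simp add: algebra_simps)
    then show ?thesis using that by (simp add: divide_simps mult.commute)
  qed
  then have "eventually (\<lambda>l. (\<theta> (g l) - \<theta> (g 0)) / (l - 0)
      \<le> \<theta> b - \<theta> a - m / 2 * (1 - l) * (b - a)^2) (at_right 0)"
    unfolding eventually_at_right_field by (intro exI[of _ 1]) auto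
  moreover have "((\<lambda>l. \<theta> b - \<theta> a - m / 2 * (1 - l) * (b - a)^2)
      \<longlongrightarrow> \<theta> b - \<theta> a - m / 2 * (1 - 0) * (b - a)^2) (at_right 0)"
    by (intro tendsto_intros)
  ultimately have "\<theta>' a * (b - a) \<le> \<theta> b - \<theta> a - m / 2 * (1 - 0) * (b - a)^2"
    using lim by (intro tendsto_le[OF trivial_limit_at_right_real]) auto
  then show ?thesis by simp
qed

locale penalty_kernel =
  fixes \<theta> \<theta>' :: "real \<Rightarrow> real"
  assumes strongly_convex: "strongly_convex_on {0..1} \<theta>"
    and continuous: "continuous_on {0..1} \<theta>"
    and has_deriv: "\<And>z. z \<in> {0<..1} \<Longrightarrow> (\<theta> has_real_derivative \<theta>' z) (at z within {0..1})"
    and continuous_deriv: "continuous_on {0<..1} \<theta>'"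
begin

lemma tangent_less:
  assumes "a \<in> {0<..1}" "b \<in> {0..1}" "a \<noteq> b"
  shows "\<theta> a + \<theta>' a * (b - a) < \<theta> b"
proof -
  obtain m where "m > 0" and sc: "\<forall>a\<in>{0..1}. \<forall>b\<in>{0..1}. \<forall>l\<in>{0..1}.
      \<theta> (l * a + (1 - l) * b) \<le> l * \<theta> a + (1 - l) * \<theta> b - m / 2 * l * (1 - l) * (a - b)^2"
    using strongly_convex unfolding strongly_convex_on_def by blast
  with assms have "0 < m / 2 * (b - a)^2" by simp
  then show ?thesis
    using strongly_convex_tangent[where \<theta>=\<theta> and \<theta>'=\<theta>' and m=m and a=a and b=b,
        OF sc has_deriv[OF assms(1)]] assms by auto
qed

lemma tangent_le: "a \<in> {0<..1} \<Longrightarrow> b \<in> {0..1} \<Longrightarrow> \<theta> a + \<theta>' a * (b - a) \<le> \<theta> b"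
  using tangent_less[of a b] by (cases "a = b") auto

lemma midpoint_less:
  assumes "a \<in> {0..1}" "b \<in> {0..1}" "a \<noteq> b"
  shows "\<theta> ((a + b) / 2) < (\<theta> a + \<theta> b) / 2"
proof -
  obtain m where "m > 0" and "\<theta> ((1/2) * a + (1 - 1/2) * b)
      \<le> (1/2) * \<theta> a + (1 - 1/2) * \<theta> b - m / 2 * (1/2) * (1 - 1/2) * (a - b)^2"
    using strongly_convex assms unfolding strongly_convex_on_def by fastforce
  moreover have "0 < m / 2 * (1/2) * (1 - 1/2) * (a - b)^2" using \<open>m > 0\<close> assms by simp
  ultimately show ?thesis by (simp add: add_divide_distrib)
qed

lemma deriv_strict_mono:
  assumes "a \<in> {0<..1}" "b \<in> {0<..1}" "a < b"
  shows "\<theta>' a < \<theta>' b"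
proof -
  have "\<theta> a + \<theta>' a * (b - a) < \<theta> b" "\<theta> b + \<theta>' b * (a - b) < \<theta> a"
    using tangent_less assms by auto
  then have "0 < (\<theta>' b - \<theta>' a) * (b - a)" by (simp add: algebra_simps)
  then show ?thesis using assms by (simp add: zero_less_mult_iff)
qed

lemma deriv_mono: "a \<in> {0<..1} \<Longrightarrow> b \<in> {0<..1} \<Longrightarrow> a \<le> b \<Longrightarrow> \<theta>' a \<le> \<theta>' b"
  using deriv_strict_mono by (cases "a = b") (auto simp: less_le)

lemma deriv_le_if_left_bounded:
  assumes p: "p \<in> {0<..1}" and C: "\<And>s. 0 < s \<Longrightarrow> s < p \<Longrightarrow> \<theta>' s \<le> C"
  shows "\<theta>' p \<le> C"
proof -
  have "(\<theta>' \<longlongrightarrow> \<theta>' p) (at p within {0<..1})"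
    using continuous_deriv p by (simp add: continuous_on_def)
  then have "(\<theta>' \<longlongrightarrow> \<theta>' p) (at p within {p/2..p})"
    by (rule tendsto_within_subset) (use p in auto)
  then have "(\<theta>' \<longlongrightarrow> \<theta>' p) (at_left p)" using p by (simp add: at_within_Icc_at_left)
  moreover have "eventually (\<lambda>s. \<theta>' s \<le> C) (at_left p)"
    unfolding eventually_at_left_field using p C by (intro exI[of _ 0]) auto
  ultimately show ?thesis by (rule tendsto_upperbound) simp
qed

lemma deriv0_eq_Inf: "deriv0 \<theta>' = (INF s\<in>{0<..1}. ereal (\<theta>' s))"
  (is "_ = ?L")
proof -
  have "((\<lambda>s. ereal (\<theta>' s)) \<longlongrightarrow> ?L) (at_right 0)"
  proof (rule order_tendstoI)
    fix a assume "a < ?L"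
    then have "\<forall>s\<in>{0<..1}. a < ereal (\<theta>' s)"
      using INF_lower less_le_trans by (metis (no_types, lifting))
    then show "eventually (\<lambda>s. a < ereal (\<theta>' s)) (at_right 0)"
      unfolding eventually_at_right_field by (intro exI[of _ 1]) auto
  next
    fix a assume "?L < a"
    then obtain s0 where s0: "s0 \<in> {0<..1}" "ereal (\<theta>' s0) < a" by (auto simp: INF_less_iff)
    have "ereal (\<theta>' s) < a" if "0 < s" "s < s0" for s
      using deriv_mono[of s s0] s0 that by (meson ereal_less_eq(3) greaterThanAtMost_iff
          less_eq_real_def order_le_less_trans order_less_le_trans)
    then show "eventually (\<lambda>s. ereal (\<theta>' s) < a) (at_right 0)"
      unfolding eventually_at_right_field using s0 by (intro exI[of _ s0]) auto
  qed
  then show ?thesis unfolding deriv0_def by (intro tendsto_Lim) simp_all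
qed

lemma deriv1_eq: "deriv1 \<theta>' = ereal (\<theta>' 1)"
proof -
  have "(\<theta>' \<longlongrightarrow> \<theta>' 1) (at 1 within {0<..1})"
    using continuous_deriv by (simp add: continuous_on_def)
  then have "(\<theta>' \<longlongrightarrow> \<theta>' 1) (at 1 within {1/2..1})"
    by (rule tendsto_within_subset) auto
  then have "((\<lambda>s. ereal (\<theta>' s)) \<longlongrightarrow> ereal (\<theta>' 1)) (at_left 1)"
    by (simp add: at_within_Icc_at_left tendsto_ereal)
  then show ?thesis unfolding deriv1_def by (intro tendsto_Lim) simp_all
qed

lemma deriv0_less:
  assumes "p \<in> {0<..1}"
  shows "deriv0 \<theta>' < ereal (\<theta>' p)"
proof -
  have "deriv0 \<theta>' \<le> ereal (\<theta>' (p/2))"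
    unfolding deriv0_eq_Inf using assms by (intro INF_lower) auto
  also have "\<dots> < ereal (\<theta>' p)" using assms by (simp add: deriv_strict_mono)
  finally show ?thesis .
qed

lemma phi_inverse:
  assumes "deriv0 \<theta>' < ereal z" "z < \<theta>' 1"
  shows "phi \<theta>' z \<in> {0<..<1}" "\<theta>' (phi \<theta>' z) = z"
proof -
  obtain s0 where s0: "s0 \<in> {0<..1}" "\<theta>' s0 < z"
    using assms(1) by (auto simp: deriv0_eq_Inf INF_less_iff)
  moreover have "continuous_on {s0..1} \<theta>'"
    using s0 by (intro continuous_on_subset[OF continuous_deriv]) auto
  ultimately obtain s where s: "s0 \<le> s" "s \<le> 1" "\<theta>' s = z"
    using IVT'[of \<theta>' s0 z 1] assms(2) by auto
  with assms(2) s0 have ex: "s \<in> {0<..<1} \<and> \<theta>' s = z" by (cases "s = 1") auto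
  have "s' = s" if "s' \<in> {0<..<1} \<and> \<theta>' s' = z" for s'
    using deriv_strict_mono[of s' s] deriv_strict_mono[of s s'] ex that
    by (cases s' s rule: linorder_cases) auto
  then have "(THE s. s \<in> {0<..<1} \<and> \<theta>' s = z) = s" using ex by (intro the_equality) blast+
  then have "phi \<theta>' z = s" using assms by (simp add: phi_def deriv1_eq)
  with ex show "phi \<theta>' z \<in> {0<..<1}" "\<theta>' (phi \<theta>' z) = z" by auto
qed

lemma phi_nonneg: "0 \<le> phi \<theta>' z"
proof (cases "deriv0 \<theta>' < ereal z \<and> z < \<theta>' 1")
  case True
  then show ?thesis using phi_inverse(1)[of z] by simp
qed (auto simp: phi_def deriv1_eq not_le)

lemma le_phi:
  assumes p: "p \<in> {0<..1}" and z: "\<theta>' p \<le> z"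
  shows "p \<le> phi \<theta>' z"
proof -
  have z0: "deriv0 \<theta>' < ereal z"
    using deriv0_less[OF p] z by (meson ereal_less_eq(3) order_less_le_trans)
  show ?thesis
  proof (cases "\<theta>' 1 \<le> z")
    case True
    moreover have "\<not> ereal z \<le> deriv0 \<theta>'" using z0 by simp
    ultimately show ?thesis using p by (simp add: phi_def deriv1_eq)
  next
    case False
    with phi_inverse[OF z0] z p deriv_strict_mono[of "phi \<theta>' z" p]
    show ?thesis by force
  qed
qed

lemma extinct_in_finite_time:
  assumes "\<bar>deriv0 \<theta>'\<bar> \<noteq> \<infinity>" "a > 0"
    and "\<And>t. t \<ge> 0 \<Longrightarrow> 0 \<le> f t \<and> f t \<le> phi \<theta>' (c - a * t)"
  shows "\<exists>T\<ge>0. \<forall>t\<ge>T. f t = 0"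
proof -
  obtain r where r: "deriv0 \<theta>' = ereal r" using assms(1) by (cases "deriv0 \<theta>'") auto
  show ?thesis
  proof (intro exI[of _ "max 0 ((c - r) / a)"] conjI allI impI)
    fix t assume t: "max 0 ((c - r) / a) \<le> t"
    then have "c - r \<le> t * a" using assms(2) by (simp add: divide_le_eq)
    then have "phi \<theta>' (c - a * t) = 0" using r by (simp add: phi_def algebra_simps)
    moreover have "0 \<le> f t \<and> f t \<le> phi \<theta>' (c - a * t)" using t by (intro assms(3)) simp
    ultimately show "f t = 0" by simp
  qed simp
qed

end

section \<open>The choice map of a decomposable penalty\<close>

definition choice_objective :: "(('a \<Rightarrow> real) \<Rightarrow> real) \<Rightarrow> 'a set \<Rightarrow> ('a \<Rightarrow> real) \<Rightarrow> ('a \<Rightarrow> real) \<Rightarrow> real"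
  where "choice_objective h A y q = (\<Sum>a\<in>A. y a * q a) - h q"

lemma choice_k_maximizer:
  assumes "\<exists>!p. p \<in> mixed_strats A \<and> (\<forall>q\<in>mixed_strats A. choice_objective h A y q \<le> choice_objective h A y p)"
  shows "choice_k h A y \<in> mixed_strats A"
    and "q \<in> mixed_strats A \<Longrightarrow> choice_objective h A y q \<le> choice_objective h A y (choice_k h A y)"
  using theI'[OF assms] unfolding choice_k_def choice_objective_def by auto

lemma mixed_strats_midpoint:
  "p \<in> mixed_strats A \<Longrightarrow> q \<in> mixed_strats A \<Longrightarrow> (\<lambda>a. (p a + q a) / 2) \<in> mixed_strats A"
  by (auto simp: mixed_strats_def sum_divide_distrib[symmetric] sum.distrib)

lemma sum_fun_upd2:
  fixes f :: "'a \<Rightarrow> 'c \<Rightarrow> real"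
  assumes "finite A" "\<alpha> \<in> A" "\<beta> \<in> A" "\<alpha> \<noteq> \<beta>"
  shows "(\<Sum>a\<in>A. f a ((p(\<alpha> := u, \<beta> := v)) a))
    = (\<Sum>a\<in>A. f a (p a)) - f \<alpha> (p \<alpha>) - f \<beta> (p \<beta>) + f \<alpha> u + f \<beta> v"
proof -
  have A: "A = insert \<alpha> (insert \<beta> (A - {\<alpha>, \<beta>}))" using assms by auto
  have "(\<Sum>a\<in>A - {\<alpha>, \<beta>}. f a ((p(\<alpha> := u, \<beta> := v)) a)) = (\<Sum>a\<in>A - {\<alpha>, \<beta>}. f a (p a))"
    by (rule sum.cong) auto
  then show ?thesis using assms by (subst (1 2) A) (simp add: sum.insert_remove)
qed

lemma mixed_strats_shift:
  assumes p: "p \<in> mixed_strats A" and "finite A" "\<alpha> \<in> A" "\<beta> \<in> A" "\<alpha> \<noteq> \<beta>"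
    and e: "0 \<le> e" "e \<le> p \<alpha>"
  shows "p(\<alpha> := p \<alpha> - e, \<beta> := p \<beta> + e) \<in> mixed_strats A"
proof -
  have "sum (p(\<alpha> := p \<alpha> - e, \<beta> := p \<beta> + e)) A = 1"
    using sum_fun_upd2[OF assms(2-5), of "\<lambda>a x. x" p] p by (simp add: mixed_strats_def)
  then show ?thesis using p e assms(3,4) by (auto simp: mixed_strats_def)
qed

context penalty_kernel
begin

lemma decomp_penalty_midpoint_less:
  assumes "finite A" "p \<in> mixed_strats A" "q \<in> mixed_strats A" "p \<noteq> q"
  shows "decomp_penalty \<theta> A (\<lambda>a. (p a + q a) / 2)
    < (decomp_penalty \<theta> A p + decomp_penalty \<theta> A q) / 2"
proof -
  obtain b where b: "p b \<noteq> q b" using assms(4) by auto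
  have "b \<in> A"
  proof (rule ccontr)
    assume "b \<notin> A"
    with assms(2,3) have "p b = 0" "q b = 0" by (auto simp: mixed_strats_def)
    with b show False by simp
  qed
  have "\<theta> ((p a + q a) / 2) \<le> (\<theta> (p a) + \<theta> (q a)) / 2" if "a \<in> A" for a
    using midpoint_less[of "p a" "q a"] mixed_strats_range assms by (cases "p a = q a") force+
  moreover have "\<theta> ((p b + q b) / 2) < (\<theta> (p b) + \<theta> (q b)) / 2"
    using midpoint_less[OF mixed_strats_range[OF assms(2,1)] mixed_strats_range[OF assms(3,1)] b] .
  ultimately show ?thesis
    unfolding decomp_penalty_def sum_divide_distrib sum.distrib[symmetric]
    using \<open>b \<in> A\<close> by (intro sum_strict_mono_ex1[OF assms(1)]) auto
qed

lemma ex1_choice_maximizer: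
  assumes fin: "finite A" and "A \<noteq> {}"
  shows "\<exists>!p. p \<in> mixed_strats A \<and> (\<forall>q\<in>mixed_strats A.
    choice_objective (decomp_penalty \<theta> A) A y q \<le> choice_objective (decomp_penalty \<theta> A) A y p)"
proof -
  let ?F = "choice_objective (decomp_penalty \<theta> A) A y"
  obtain a0 where "a0 \<in> A" using assms by auto
  then have "(\<lambda>b. if b = a0 then 1 else 0) \<in> mixed_strats A"
    using fin by (auto simp: mixed_strats_def)
  moreover have "continuous_on (mixed_strats A) ?F"
    unfolding choice_objective_def decomp_penalty_def
  proof (intro continuous_intros)
    fix b
    show "continuous_on (mixed_strats A) (\<lambda>q. \<theta> (q b))"
      by (rule continuous_on_compose2[OF continuous, of _ "\<lambda>q. q b"])
        (auto intro: continuous_on_subset[OF continuous_on_product_coordinates]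
          mixed_strats_range[OF _ fin])
  qed (auto intro: continuous_on_subset[OF continuous_on_product_coordinates])
  ultimately obtain p where p: "p \<in> mixed_strats A" "\<forall>q\<in>mixed_strats A. ?F q \<le> ?F p"
    using continuous_attains_sup[OF compact_mixed_strats[OF fin]] by blast
  have "q = p" if q: "q \<in> mixed_strats A" "\<forall>r\<in>mixed_strats A. ?F r \<le> ?F q" for q
  proof (rule ccontr)
    assume "q \<noteq> p"
    let ?r = "\<lambda>a. (p a + q a) / 2"
    have "(\<Sum>a\<in>A. y a * ?r a) = ((\<Sum>a\<in>A. y a * p a) + (\<Sum>a\<in>A. y a * q a)) / 2"
      by (simp add: sum_divide_distrib[symmetric] sum.distrib[symmetric] algebra_simps)
    with decomp_penalty_midpoint_less[OF fin p(1) q(1) \<open>q \<noteq> p\<close>[symmetric]]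
    have "(?F p + ?F q) / 2 < ?F ?r" by (simp add: choice_objective_def field_simps)
    moreover have "?F p = ?F q" using p q by (meson order_antisym)
    ultimately show False using p mixed_strats_midpoint[OF p(1) q(1)] by auto
  qed
  with p show ?thesis by blast
qed

lemma choice_k_in_mixed_strats:
  "finite A \<Longrightarrow> A \<noteq> {} \<Longrightarrow> choice_k (decomp_penalty \<theta> A) A y \<in> mixed_strats A"
  by (rule choice_k_maximizer(1)[OF ex1_choice_maximizer])

lemma deriv_choice_le:
  assumes fin: "finite A" and ab: "\<alpha> \<in> A" "\<beta> \<in> A" "\<alpha> \<noteq> \<beta>"
    and p: "p = choice_k (decomp_penalty \<theta> A) A y" and pa: "p \<alpha> > 0"
  shows "\<theta>' (p \<alpha>) \<le> y \<alpha> - y \<beta> + \<theta>' 1"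
proof -
  have max: "\<And>q. q \<in> mixed_strats A \<Longrightarrow> choice_objective (decomp_penalty \<theta> A) A y q
      \<le> choice_objective (decomp_penalty \<theta> A) A y p"
    and pm: "p \<in> mixed_strats A"
    using choice_k_maximizer[OF ex1_choice_maximizer[OF fin]] ab p by auto
  have "p \<alpha> + p \<beta> = sum p {\<alpha>, \<beta>}" using ab by simp
  also have "\<dots> \<le> sum p A" using pm ab fin by (intro sum_mono2) (auto simp: mixed_strats_def)
  finally have pab: "p \<alpha> + p \<beta> \<le> 1" using pm by (simp add: mixed_strats_def)
  have pb: "0 \<le> p \<beta>" using mixed_strats_range[OF pm fin] by simp
  show ?thesis
  proof (rule deriv_le_if_left_bounded)
    show "p \<alpha> \<in> {0<..1}" using pa pab pb by auto
    fix s assume s: "0 < s" "s < p \<alpha>"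
    define e where "e = p \<alpha> - s"
    have e: "0 < e" "e < p \<alpha>" using s unfolding e_def by linarith+
    have "choice_objective (decomp_penalty \<theta> A) A y (p(\<alpha> := p \<alpha> - e, \<beta> := p \<beta> + e))
        \<le> choice_objective (decomp_penalty \<theta> A) A y p"
      using e by (intro max mixed_strats_shift[OF pm fin ab]) auto
    then have "y \<alpha> * (p \<alpha> - e) + y \<beta> * (p \<beta> + e) - \<theta> (p \<alpha> - e) - \<theta> (p \<beta> + e)
        \<le> y \<alpha> * p \<alpha> + y \<beta> * p \<beta> - \<theta> (p \<alpha>) - \<theta> (p \<beta>)"
      using sum_fun_upd2[OF fin ab, of "\<lambda>a x. y a * x" p] sum_fun_upd2[OF fin ab, of "\<lambda>a. \<theta>" p]
      by (simp add: choice_objective_def decomp_penalty_def)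
    moreover have "\<theta> (p \<alpha> - e) + \<theta>' (p \<alpha> - e) * e \<le> \<theta> (p \<alpha>)"
      using tangent_le[of "p \<alpha> - e" "p \<alpha>"] e pab pb by auto
    moreover have "\<theta> (p \<beta> + e) - \<theta>' (p \<beta> + e) * e \<le> \<theta> (p \<beta>)"
      using tangent_le[of "p \<beta> + e" "p \<beta>"] e pab pb by auto
    moreover have "e * \<theta>' (p \<beta> + e) \<le> e * \<theta>' 1"
      using deriv_mono[of "p \<beta> + e" 1] e pab pb by (intro mult_left_mono) auto
    ultimately have "e * \<theta>' (p \<alpha> - e) \<le> e * (y \<alpha> - y \<beta> + \<theta>' 1)"
      by (simp add: algebra_simps)
    then show "\<theta>' s \<le> y \<alpha> - y \<beta> + \<theta>' 1" using e by (simp add: e_def)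
  qed
qed

lemma choice_k_le_phi:
  assumes "finite A" "\<alpha> \<in> A" "\<beta> \<in> A" "\<alpha> \<noteq> \<beta>" and "y \<alpha> - y \<beta> + \<theta>' 1 \<le> z"
  shows "choice_k (decomp_penalty \<theta> A) A y \<alpha> \<le> phi \<theta>' z"
proof -
  let ?p = "choice_k (decomp_penalty \<theta> A) A y"
  have "?p \<in> mixed_strats A" using assms by (intro choice_k_in_mixed_strats) auto
  then have "?p \<alpha> \<in> {0..1}" using assms(1) by (rule mixed_strats_range)
  moreover have "\<theta>' (?p \<alpha>) \<le> z" if "?p \<alpha> > 0"
    using deriv_choice_le[OF assms(1-4) refl that] assms(5) by simp
  ultimately show ?thesis using le_phi phi_nonneg by (cases "?p \<alpha> = 0") auto
qed

end

lemma choice_map_in_strategy_space: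
  assumes "\<And>j. j \<in> N \<Longrightarrow> finite (A j) \<and> A j \<noteq> {}"
    and "\<And>j. j \<in> N \<Longrightarrow> penalty_kernel (\<theta> j) (\<theta>' j)"
  shows "choice_map N A (\<lambda>i. decomp_penalty (\<theta> i) (A i)) y \<in> strategy_space N A"
proof -
  have "choice_k (decomp_penalty (\<theta> j) (A j)) (A j) (y j) \<in> mixed_strats (A j)" if "j \<in> N" for j
    using assms(1)[OF that] by (intro penalty_kernel.choice_k_in_mixed_strats[OF assms(2)[OF that]]) auto
  then show ?thesis by (auto simp: strategy_space_def choice_map_def)
qed

section \<open>The score dynamics\<close>

lemma DERIV_le_imp_le_affine:
  fixes D :: "real \<Rightarrow> real"
  assumes der: "\<And>s. s \<ge> 0 \<Longrightarrow> (D has_real_derivative D' s) (at s within {0..})"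
    and bound: "\<And>s. s \<ge> 0 \<Longrightarrow> D' s \<le> -r" and t: "t \<ge> 0"
  shows "D t \<le> D 0 - r * t"
proof -
  define h where "h = (\<lambda>s. D s + r * s)"
  have hder: "(h has_real_derivative D' s + r) (at s within {0..})" if "s \<ge> 0" for s
    unfolding h_def using der[OF that] by (auto intro!: derivative_eq_intros)
  have "h t \<le> h 0"
  proof (rule DERIV_nonpos_imp_decreasing_open[OF t])
    fix s assume s: "0 < s" "s < t"
    have "at s within {0..} = at s" by (rule at_within_interior) (use s in auto)
    then show "\<exists>y. (h has_real_derivative y) (at s) \<and> y \<le> 0"
      using hder[of s] bound[of s] s by auto
  next
    have "continuous_on {0..} h" using hder by (intro DERIV_continuous_on) auto
    then show "continuous_on {0..t} h" by (rule continuous_on_subset) auto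
  qed
  then show ?thesis by (simp add: h_def)
qed

theorem proposition4p2:
  fixes N :: "'n set" and A :: "'n \<Rightarrow> 'a set"
    and u :: "'n \<Rightarrow> ('n \<Rightarrow> 'a) \<Rightarrow> real"
    and \<theta> \<theta>' :: "'n \<Rightarrow> real \<Rightarrow> real"
    and \<gamma> :: "'n \<Rightarrow> real"
    and y :: "real \<Rightarrow> 'n \<Rightarrow> 'a \<Rightarrow> real"
    and x :: "real \<Rightarrow> 'n \<Rightarrow> 'a \<Rightarrow> real"
    and k :: 'n and \<alpha> \<beta> :: 'a
  assumes N: "finite N" "N \<noteq> {}"
    and A: "\<And>j. j \<in> N \<Longrightarrow> finite (A j) \<and> A j \<noteq> {}"
    and theta_cont: "\<And>j. j \<in> N \<Longrightarrow> continuous_on {0..1} (\<theta> j)"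
    and theta_sc: "\<And>j. j \<in> N \<Longrightarrow> strongly_convex_on {0..1} (\<theta> j)"
    and theta_deriv: "\<And>j z. j \<in> N \<Longrightarrow> z \<in> {0<..1} \<Longrightarrow>
          (\<theta> j has_real_derivative \<theta>' j z) (at z within {0..1})"
    and theta_deriv_cont: "\<And>j. j \<in> N \<Longrightarrow> continuous_on {0<..1} (\<theta>' j)"
    and gamma: "\<And>j. j \<in> N \<Longrightarrow> \<gamma> j > 0"
    and ode: "\<And>j a t. j \<in> N \<Longrightarrow> a \<in> A j \<Longrightarrow> t \<ge> 0 \<Longrightarrow>
          ((\<lambda>s. y s j a) has_real_derivative
             \<gamma> j * payoff_vec N A u j a (choice_map N A (\<lambda>i. decomp_penalty (\<theta> i) (A i)) (y t)))
          (at t within {0..})"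
    and xdef: "\<And>t. t \<ge> 0 \<Longrightarrow> x t = choice_map N A (\<lambda>i. decomp_penalty (\<theta> i) (A i)) (y t)"
    and k: "k \<in> N" and ab: "\<alpha> \<in> A k" "\<beta> \<in> A k"
    and dominated: "\<forall>z \<in> strategy_space N A. payoff_vec N A u k \<alpha> z < payoff_vec N A u k \<beta> z"
  shows "(\<exists>c. \<forall>t\<ge>0. x t k \<alpha> \<le>
            phi (\<theta>' k) (c - \<gamma> k * (INF z\<in>strategy_space N A. payoff_vec N A u k \<beta> z - payoff_vec N A u k \<alpha> z) * t))
       \<and> (\<bar>deriv0 (\<theta>' k)\<bar> \<noteq> \<infinity> \<longrightarrow> (\<exists>T\<ge>0. \<forall>t\<ge>T. x t k \<alpha> = 0))"
proof -
  define \<delta> where "\<delta> = (INF z\<in>strategy_space N A. payoff_vec N A u k \<beta> z - payoff_vec N A u k \<alpha> z)"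
  have kernel: "\<And>j. j \<in> N \<Longrightarrow> penalty_kernel (\<theta> j) (\<theta>' j)"
    using theta_sc theta_cont theta_deriv theta_deriv_cont by unfold_locales
  interpret penalty_kernel "\<theta> k" "\<theta>' k" by (rule kernel[OF k])
  have xS: "x t \<in> strategy_space N A" if "t \<ge> 0" for t
    unfolding xdef[OF that] by (rule choice_map_in_strategy_space[OF A kernel])
  note gap = payoff_gap_Inf_pos[OF A dominated, folded \<delta>_def]
  have "\<alpha> \<noteq> \<beta>" using dominated strategy_space_nonempty[OF A] by force
  have ode_x: "((\<lambda>s. y s k a) has_real_derivative \<gamma> k * payoff_vec N A u k a (x t)) (at t within {0..})"
    if "a \<in> A k" "t \<ge> 0" for a t
    using ode[OF k that] xdef[OF that(2)] by simp
  have score: "y t k \<alpha> - y t k \<beta> \<le> y 0 k \<alpha> - y 0 k \<beta> - \<gamma> k * \<delta> * t" if "t \<ge> 0" for t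
  proof (rule DERIV_le_imp_le_affine[OF DERIV_diff[OF ode_x[OF ab(1)] ode_x[OF ab(2)]] _ that])
    fix s :: real assume "s \<ge> 0"
    then have "\<delta> \<le> payoff_vec N A u k \<beta> (x s) - payoff_vec N A u k \<alpha> (x s)"
      by (intro gap(2) xS)
    then have "\<gamma> k * \<delta> \<le> \<gamma> k * (payoff_vec N A u k \<beta> (x s) - payoff_vec N A u k \<alpha> (x s))"
      using gamma[OF k] by (intro mult_left_mono) auto
    then show "\<gamma> k * payoff_vec N A u k \<alpha> (x s) - \<gamma> k * payoff_vec N A u k \<beta> (x s) \<le> - (\<gamma> k * \<delta>)"
      by (simp add: algebra_simps)
  qed
  define c where "c = y 0 k \<alpha> - y 0 k \<beta> + \<theta>' k 1"
  have bound: "x t k \<alpha> \<le> phi (\<theta>' k) (c - \<gamma> k * \<delta> * t)" if "t \<ge> 0" for t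
  proof -
    have "y t k \<alpha> - y t k \<beta> + \<theta>' k 1 \<le> c - \<gamma> k * \<delta> * t"
      using score[OF that] by (simp add: c_def)
    with choice_k_le_phi[OF conjunct1[OF A[OF k]] ab \<open>\<alpha> \<noteq> \<beta>\<close>]
    show ?thesis using xdef[OF that] k by (simp add: choice_map_def)
  qed
  have "0 \<le> x t k \<alpha>" if "t \<ge> 0" for t
    using xS[OF that] k ab A[OF k] mixed_strats_range[of "x t k" "A k" \<alpha>]
    by (simp add: strategy_space_def)
  then have "\<bar>deriv0 (\<theta>' k)\<bar> \<noteq> \<infinity> \<Longrightarrow> \<exists>T\<ge>0. \<forall>t\<ge>T. x t k \<alpha> = 0"
    using bound gamma[OF k] gap(1) by (intro extinct_in_finite_time[where a = "\<gamma> k * \<delta>" and c = c]) auto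
  with bound show ?thesis unfolding \<delta>_def by blast
qed

end
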